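(* Let $A=\bigsqcup_{n\in\omega}A_n$ where each $A_n$ is a set equipped with a total order $<_n$ order-isomorphic to $(\mathbb{Z},<)$, and for $a\in A_n$ let $s(a)$ be the immediate successor of $a$ in $(A_n,<_n)$. Let $J=A\times\{0,1\}$ and consider the free monoid on the alphabet $J^{\pm1}=\{(a,i),(a,i)^{-1}: a\in A, i\in\{0,1\}\}$ with empty word $e$. Let $\mathcal{R}$ be the rewriting system with, for every $a\in A$, the rules (i) $(a,0)(a,0)^{-1}\mapsto e$; (ii) $(a,0)^{-1}(a,0)\mapsto e$; (iii) $(a,1)(a,1)^{-1}\mapsto e$; (iv) $(a,1)^{-1}(a,1)\mapsto e$; (v) $(s(a),0)(a,1)\mapsto (s(a),1)^{-1}(s(a),0)$; (vi) $(s(a),0)(a,1)^{-1}\mapsto (s(a),1)(s(a),0)$; (vii) $(s(a),0)^{-1}(s(a),1)\mapsto (a,1)^{-1}(s(a),0)^{-1}$; (viii) $(s(a),0)^{-1}(s(a),1)^{-1}\mapsto (a,1)(s(a),0)^{-1}$. Then $\mathcal{R}$ is terminating and locally confluent (hence confluent), so every equivalence class of $\leftrightarrow_{\mathcal{R}}^*$ contains a unique terminus. Moreover every terminus is a freely reduced word, and the set $R$ of termini is a set of normal forms for the group $\mathcal{G}=F(J)/\langle\langle\{(s(a),0)(a,1)(s(a),0)^{-1}(s(a),1)\}_{a\in A}\rangle\rangle$: each element of $\mathcal{G}$ is represented by exactly one word in $R$.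
   Context: Work in $\mathsf{ZFC}$. For a rewriting system $\mathcal{R}$ (a set of pairs of words) on a free monoid, $w_0\to_{\mathcal{R}}w_1$ means $w_0\equiv v_0v_1v_2$, $w_1\equiv v_0v_1'v_2$ with $(v_1,v_1')\in\mathcal{R}$; $\to^*_{\mathcal{R}}$ is its transitive closure and $\leftrightarrow^*_{\mathcal{R}}$ the generated equivalence relation. $\mathcal{R}$ is terminating if there is no infinite chain $w_0\to_{\mathcal{R}}w_1\to_{\mathcal{R}}\cdots$; locally confluent if whenever $w_0\to_{\mathcal{R}}w_1$ and $w_0\to_{\mathcal{R}}w_2$ there is $w_3$ with $w_1\to^*_{\mathcal{R}}w_3$ and $w_2\to^*_{\mathcal{R}}w_3$; confluent is the same with $\to^*_{\mathcal{R}}$ in the hypotheses. A terminus is a word $w$ such that no rule applies to it. $F(J)$ is the free group on $J$, and $\langle\langle X\rangle\rangle$ the normal closure. *)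

theory Defs
  imports Main
begin

datatype 'j letter = Pos 'j | Neg 'j

definition alphabet :: "'j set \<Rightarrow> 'j letter set" where
  "alphabet J = Pos ` J \<union> Neg ` J"

definition words :: "'j set \<Rightarrow> 'j letter list set" where
  "words J = {w. set w \<subseteq> alphabet J}"

definition freely_reduced :: "'j letter list \<Rightarrow> bool" where
  "freely_reduced w \<longleftrightarrow>
     \<not> (\<exists>u v j. w = u @ [Pos j, Neg j] @ v \<or> w = u @ [Neg j, Pos j] @ v)"

definition rstep :: "('c list \<times> 'c list) set \<Rightarrow> 'c list \<Rightarrow> 'c list \<Rightarrow> bool" where
  "rstep R w0 w1 \<longleftrightarrow> (\<exists>v0 v1 v1' v2. (v1, v1') \<in> R \<and> w0 = v0 @ v1 @ v2 \<and> w1 = v0 @ v1' @ v2)"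

definition sym_cl :: "('c \<Rightarrow> 'c \<Rightarrow> bool) \<Rightarrow> 'c \<Rightarrow> 'c \<Rightarrow> bool" where
  "sym_cl r x y \<longleftrightarrow> r x y \<or> r y x"

definition requiv :: "('c list \<times> 'c list) set \<Rightarrow> 'c list \<Rightarrow> 'c list \<Rightarrow> bool" where
  "requiv R = (sym_cl (rstep R))\<^sup>*\<^sup>*"

definition terminating_on :: "'c list set \<Rightarrow> ('c list \<times> 'c list) set \<Rightarrow> bool" where
  "terminating_on W R \<longleftrightarrow> \<not> (\<exists>f. f 0 \<in> W \<and> (\<forall>k. rstep R (f k) (f (Suc k))))"

definition locally_confluent_on :: "'c list set \<Rightarrow> ('c list \<times> 'c list) set \<Rightarrow> bool" where
  "locally_confluent_on W R \<longleftrightarrow> (\<forall>w0\<in>W. \<forall>w1 w2. rstep R w0 w1 \<and> rstep R w0 w2 \<longrightarrow>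
      (\<exists>w3. (rstep R)\<^sup>*\<^sup>* w1 w3 \<and> (rstep R)\<^sup>*\<^sup>* w2 w3))"

definition confluent_on :: "'c list set \<Rightarrow> ('c list \<times> 'c list) set \<Rightarrow> bool" where
  "confluent_on W R \<longleftrightarrow> (\<forall>w0\<in>W. \<forall>w1 w2. (rstep R)\<^sup>*\<^sup>* w0 w1 \<and> (rstep R)\<^sup>*\<^sup>* w0 w2 \<longrightarrow>
      (\<exists>w3. (rstep R)\<^sup>*\<^sup>* w1 w3 \<and> (rstep R)\<^sup>*\<^sup>* w2 w3))"

definition terminus :: "('c list \<times> 'c list) set \<Rightarrow> 'c list \<Rightarrow> bool" where
  "terminus R w \<longleftrightarrow> \<not> (\<exists>w'. rstep R w w')"

text \<open>One step: insertion of a relator from X or of a trivial pair x x^{-1}, x^{-1} x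
  (x in J) at any position; its symmetric closure also allows deletion.  Two words
  over J^{+-1} represent the same element of F(J)/<<X>> iff they are related by the
  reflexive-transitive closure of this.\<close>
definition gstep :: "'j set \<Rightarrow> 'j letter list set \<Rightarrow> 'j letter list \<Rightarrow> 'j letter list \<Rightarrow> bool" where
  "gstep J X w0 w1 \<longleftrightarrow> (\<exists>u v r. (r \<in> X \<or> (\<exists>j\<in>J. r = [Pos j, Neg j] \<or> r = [Neg j, Pos j]))
      \<and> w0 = u @ v \<and> w1 = u @ r @ v)"

definition group_equiv :: "'j set \<Rightarrow> 'j letter list set \<Rightarrow> 'j letter list \<Rightarrow> 'j letter list \<Rightarrow> bool" where
  "group_equiv J X = (sym_cl (gstep J X))\<^sup>*\<^sup>*"

text \<open>A = disjoint union of the A n, realised as {(n,x). x \<in> A n}.\<close>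
definition Aset :: "(nat \<Rightarrow> 'a set) \<Rightarrow> (nat \<times> 'a) set" where
  "Aset A = (SIGMA n:UNIV. A n)"

definition succ_in :: "'a set \<Rightarrow> ('a \<Rightarrow> 'a \<Rightarrow> bool) \<Rightarrow> 'a \<Rightarrow> 'a" where
  "succ_in B lt x = (THE y. y \<in> B \<and> lt x y \<and> \<not> (\<exists>z\<in>B. lt x z \<and> lt z y))"

definition s :: "(nat \<Rightarrow> 'a set) \<Rightarrow> (nat \<Rightarrow> 'a \<Rightarrow> 'a \<Rightarrow> bool) \<Rightarrow> nat \<times> 'a \<Rightarrow> nat \<times> 'a" where
  "s A lt a = (fst a, succ_in (A (fst a)) (lt (fst a)) (snd a))"

definition Jset :: "(nat \<Rightarrow> 'a set) \<Rightarrow> ((nat \<times> 'a) \<times> nat) set" where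
  "Jset A = Aset A \<times> {0, 1}"

definition rules :: "(nat \<Rightarrow> 'a set) \<Rightarrow> (nat \<Rightarrow> 'a \<Rightarrow> 'a \<Rightarrow> bool)
    \<Rightarrow> (((nat \<times> 'a) \<times> nat) letter list \<times> ((nat \<times> 'a) \<times> nat) letter list) set" where
  "rules A lt = (\<Union>a\<in>Aset A.
     { ([Pos (a,0), Neg (a,0)], []),
       ([Neg (a,0), Pos (a,0)], []),
       ([Pos (a,1), Neg (a,1)], []),
       ([Neg (a,1), Pos (a,1)], []),
       ([Pos (s A lt a,0), Pos (a,1)], [Neg (s A lt a,1), Pos (s A lt a,0)]),
       ([Pos (s A lt a,0), Neg (a,1)], [Pos (s A lt a,1), Pos (s A lt a,0)]),
       ([Neg (s A lt a,0), Pos (s A lt a,1)], [Neg (a,1), Neg (s A lt a,0)]),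
       ([Neg (s A lt a,0), Neg (s A lt a,1)], [Pos (a,1), Neg (s A lt a,0)]) })"

definition relators :: "(nat \<Rightarrow> 'a set) \<Rightarrow> (nat \<Rightarrow> 'a \<Rightarrow> 'a \<Rightarrow> bool)
    \<Rightarrow> ((nat \<times> 'a) \<times> nat) letter list set" where
  "relators A lt = (\<lambda>a. [Pos (s A lt a,0), Pos (a,1), Neg (s A lt a,0), Pos (s A lt a,1)]) ` Aset A"

end

theory Submission
  imports Defs "HOL-Library.Confluence"
begin

text \<open>
  Termination: a cancellation shortens a word, and each of the rules (v)--(viii) moves a letter
  \<open>(b, 1)\<^sup>\<plusminus>\<close> to the left across a letter \<open>(b', 0)\<^sup>\<plusminus>\<close>.  Hence the length plus the
  number of pairs in which a \<open>(_, 0)\<close>-letter precedes a \<open>(_, 1)\<close>-letter strictly decreases.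
  All left-hand sides have length two, so critical pairs only come from overlaps of three letters:
  four of them have the trivial form \<open>x x\<inverse> x\<close>, and in each of the other eight one side is a
  single letter to which the other side reduces in two steps.  By Newman's lemma the system is
  confluent, so every class contains exactly one terminus.  Finally, for every rule \<open>l \<mapsto> r\<close>
  the word \<open>l r\<inverse>\<close> is a cyclic conjugate of a relator or of its inverse, while every relator
  and every \<open>x x\<inverse>\<close> rewrites to \<open>e\<close>; hence \<open>\<leftrightarrow>\<^sup>*\<close> is equality in the group.
\<close>

section \<open>Abstract rewriting\<close>

lemma equivclp_least:
  assumes "\<And>x y. r x y \<Longrightarrow> equivclp r' x y" and "equivclp r x y"
  shows "equivclp r' x y"
  using assms(2) by (induction rule: equivclp_induct) (auto dest: assms(1) intro: equivclp_trans equivclp_sym)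

lemma newman:
  assumes wf: "wfp r\<inverse>\<inverse>"
    and local_confl: "\<And>x y z. r x y \<Longrightarrow> r x z \<Longrightarrow> \<exists>u. r\<^sup>*\<^sup>* y u \<and> r\<^sup>*\<^sup>* z u"
  shows "confluentp r"
proof (rule confluentpI)
  fix x y z assume "r\<^sup>*\<^sup>* x y" "r\<^sup>*\<^sup>* x z"
  with wf show "\<exists>u. r\<^sup>*\<^sup>* y u \<and> r\<^sup>*\<^sup>* z u"
  proof (induction x arbitrary: y z rule: wfp_induct_rule)
    case (less x)
    show ?case
    proof (cases "x = y \<or> x = z")
      case True
      with less.prems show ?thesis by blast
    next
      case False
      then obtain y1 z1 where y1: "r x y1" "r\<^sup>*\<^sup>* y1 y" and z1: "r x z1" "r\<^sup>*\<^sup>* z1 z"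
        using less.prems by (metis converse_rtranclpE)
      obtain u0 where u0: "r\<^sup>*\<^sup>* y1 u0" "r\<^sup>*\<^sup>* z1 u0"
        using local_confl[OF y1(1) z1(1)] by blast
      obtain u1 where u1: "r\<^sup>*\<^sup>* y u1" "r\<^sup>*\<^sup>* u0 u1"
        using less.IH[of y1] y1 u0(1) by auto
      obtain u2 where u2: "r\<^sup>*\<^sup>* z u2" "r\<^sup>*\<^sup>* u1 u2"
        using less.IH[of z1] z1 u0(2) u1(2) by (meson conversepI rtranclp_trans)
      from u1 u2 show ?thesis by (meson rtranclp_trans)
    qed
  qed
qed

lemma wfp_imp_ex_normal_form:
  assumes "wfp r\<inverse>\<inverse>"
  shows "\<exists>t. r\<^sup>*\<^sup>* x t \<and> \<not> (\<exists>t'. r t t')"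
  using assms
proof (induction x rule: wfp_induct_rule)
  case (less x)
  show ?case
  proof (cases "\<exists>y. r x y")
    case True
    then obtain y where "r x y" by blast
    with less.IH[of y] show ?thesis by (meson conversepI converse_rtranclp_into_rtranclp)
  qed blast
qed

lemma confluentp_normal_form_unique:
  assumes "confluentp r" and "equivclp r t1 t2" and "\<not> (\<exists>u. r t1 u)" and "\<not> (\<exists>u. r t2 u)"
  shows "t1 = t2"
proof -
  have "(r\<^sup>*\<^sup>* OO r\<inverse>\<inverse>\<^sup>*\<^sup>*) t1 t2"
    using assms(1,2) semiconfluentp_equivclp confluentp_imp_semiconfluentp by metis
  then obtain u where "r\<^sup>*\<^sup>* t1 u" "r\<^sup>*\<^sup>* t2 u"
    unfolding rtranclp_conversep by auto
  with assms(3,4) show ?thesis by (metis converse_rtranclpE)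
qed

section \<open>String rewriting\<close>

lemma rstep_by_rule: "(l, r) \<in> R \<Longrightarrow> rstep R (p @ l @ q) (p @ r @ q)"
  unfolding rstep_def by blast

lemma rstep_in_context: "rstep R x y \<Longrightarrow> rstep R (p @ x @ q) (p @ y @ q)"
  unfolding rstep_def by (metis append.assoc)

lemma rtranclp_rstep_in_context: "(rstep R)\<^sup>*\<^sup>* x y \<Longrightarrow> (rstep R)\<^sup>*\<^sup>* (p @ x @ q) (p @ y @ q)"
  by (induction rule: rtranclp_induct) (auto intro: rtranclp.rtrancl_into_rtrancl rstep_in_context)

lemma sym_cl_eq_symclp: "sym_cl r = symclp r"
  by (intro ext) (simp add: sym_cl_def symclp_def)

lemma requiv_eq_equivclp: "requiv R = equivclp (rstep R)"
  unfolding requiv_def sym_cl_eq_symclp equivclp_def ..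

lemma terminating_on_if_wfp: "wfp (rstep R)\<inverse>\<inverse> \<Longrightarrow> terminating_on W R"
  unfolding terminating_on_def using wf_iff_no_infinite_down_chain[to_pred, of "(rstep R)\<inverse>\<inverse>"] by auto

lemma ex1_terminus_requiv:
  assumes wf: "wfp (rstep R)\<inverse>\<inverse>" and confl: "confluentp (rstep R)"
    and closed: "\<And>x y. rstep R x y \<Longrightarrow> x \<in> W \<Longrightarrow> y \<in> W" and "w \<in> W"
  shows "\<exists>!t. t \<in> W \<and> terminus R t \<and> requiv R w t"
proof -
  obtain t where wt: "(rstep R)\<^sup>*\<^sup>* w t" and t: "terminus R t"
    using wfp_imp_ex_normal_form[OF wf] unfolding terminus_def by blast
  have "t \<in> W"
    using wt \<open>w \<in> W\<close> by (induction rule: rtranclp_induct) (auto intro: closed)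
  moreover have "t' = t" if "terminus R t'" "requiv R w t'" for t'
  proof (rule confluentp_normal_form_unique[OF confl])
    show "equivclp (rstep R) t' t"
      using that(2) wt unfolding requiv_eq_equivclp
      by (meson equivclp_sym equivclp_trans rtranclp_into_equivclp)
  qed (use that t in \<open>auto simp: terminus_def\<close>)
  ultimately show ?thesis
    using wt t unfolding requiv_eq_equivclp by (auto intro: rtranclp_into_equivclp)
qed

locale length_two_rewriting =
  fixes R :: "('c list \<times> 'c list) set"
  assumes lhs_length: "(l, r) \<in> R \<Longrightarrow> length l = 2"
    and rhs_unique: "(l, r) \<in> R \<Longrightarrow> (l, r') \<in> R \<Longrightarrow> r = r'"
    and critical_pairs_join: "([a, b], r) \<in> R \<Longrightarrow> ([b, c], r') \<in> R \<Longrightarrow>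
      \<exists>u. (rstep R)\<^sup>*\<^sup>* (r @ [c]) u \<and> (rstep R)\<^sup>*\<^sup>* (a # r') u"
begin

lemma join_redexes_at_offset:
  assumes R1: "(l1, r1) \<in> R" and R2: "(l2, r2) \<in> R" and eq: "l1 @ q1 = d @ l2 @ q2"
  shows "\<exists>u. (rstep R)\<^sup>*\<^sup>* (p @ r1 @ q1) u \<and> (rstep R)\<^sup>*\<^sup>* (p @ d @ r2 @ q2) u"
proof -
  obtain a b where l1: "l1 = [a, b]"
    using lhs_length[OF R1] by (auto simp: length_Suc_conv numeral_2_eq_2)
  obtain b' c where l2: "l2 = [b', c]"
    using lhs_length[OF R2] by (auto simp: length_Suc_conv numeral_2_eq_2)
  show ?thesis
  proof (cases d)
    case Nil
    with eq l1 l2 have "l1 = l2" "q1 = q2" by auto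
    with rhs_unique[OF R1, of r2] R2 have "r1 = r2" by simp
    with Nil \<open>q1 = q2\<close> show ?thesis by auto
  next
    case (Cons x d1)
    show ?thesis
    proof (cases d1)
      case Nil
      with eq l1 l2 \<open>d = x # d1\<close> have "x = a" "b' = b" "q1 = c # q2" by auto
      with critical_pairs_join[of a b r1 c r2] R1 R2 l1 l2 obtain u
        where u1: "(rstep R)\<^sup>*\<^sup>* (r1 @ [c]) u" and u2: "(rstep R)\<^sup>*\<^sup>* (a # r2) u"
        by auto
      have "(rstep R)\<^sup>*\<^sup>* (p @ r1 @ q1) (p @ u @ q2)"
        using rtranclp_rstep_in_context[OF u1, of p q2] \<open>q1 = c # q2\<close> by simp
      moreover have "(rstep R)\<^sup>*\<^sup>* (p @ d @ r2 @ q2) (p @ u @ q2)"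
        using rtranclp_rstep_in_context[OF u2, of p q2] Nil \<open>d = x # d1\<close> \<open>x = a\<close> by simp
      ultimately show ?thesis by blast
    next
      case (Cons y d')
      with eq l1 \<open>d = x # d1\<close> have d: "d = l1 @ d'" and q1: "q1 = d' @ l2 @ q2" by auto
      have "rstep R (p @ r1 @ d' @ l2 @ q2) (p @ r1 @ d' @ r2 @ q2)"
        using rstep_by_rule[OF R2, of "p @ r1 @ d'"] by simp
      moreover have "rstep R (p @ l1 @ d' @ r2 @ q2) (p @ r1 @ d' @ r2 @ q2)"
        using rstep_by_rule[OF R1] by simp
      ultimately show ?thesis using q1 d by auto
    qed
  qed
qed

lemma locally_confluent:
  assumes "rstep R w w1" and "rstep R w w2"
  shows "\<exists>u. (rstep R)\<^sup>*\<^sup>* w1 u \<and> (rstep R)\<^sup>*\<^sup>* w2 u"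
proof -
  obtain p1 l1 r1 q1 where R1: "(l1, r1) \<in> R" and w1: "w = p1 @ l1 @ q1" "w1 = p1 @ r1 @ q1"
    using \<open>rstep R w w1\<close> unfolding rstep_def by blast
  obtain p2 l2 r2 q2 where R2: "(l2, r2) \<in> R" and w2: "w = p2 @ l2 @ q2" "w2 = p2 @ r2 @ q2"
    using \<open>rstep R w w2\<close> unfolding rstep_def by blast
  from w1(1) w2(1) have "p1 @ (l1 @ q1) = p2 @ (l2 @ q2)" by simp
  then obtain d where "p2 = p1 @ d \<and> l1 @ q1 = d @ l2 @ q2 \<or> p1 = p2 @ d \<and> l2 @ q2 = d @ l1 @ q1"
    unfolding append_eq_append_conv2 by metis
  then show ?thesis
  proof
    assume "p2 = p1 @ d \<and> l1 @ q1 = d @ l2 @ q2"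
    with join_redexes_at_offset[OF R1 R2, of q1 d q2 p1] w1 w2 show ?thesis by auto
  next
    assume "p1 = p2 @ d \<and> l2 @ q2 = d @ l1 @ q1"
    with join_redexes_at_offset[OF R2 R1, of q2 d q1 p2] w1 w2 show ?thesis by auto
  qed
qed

end

lemma rtranclp_rstep_rewrite_left_cancel_right:
  "([a, b], [a', b']) \<in> R \<Longrightarrow> ([b', c], []) \<in> R \<Longrightarrow> (rstep R)\<^sup>*\<^sup>* [a, b, c] [a']"
  using rstep_by_rule[of "[a, b]" "[a', b']" R "[]" "[c]"] rstep_by_rule[of "[b', c]" "[]" R "[a']" "[]"]
  by simp

lemma rtranclp_rstep_rewrite_right_cancel_left:
  "([b, c], [b', c']) \<in> R \<Longrightarrow> ([a, b'], []) \<in> R \<Longrightarrow> (rstep R)\<^sup>*\<^sup>* [a, b, c] [c']"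
  using rstep_by_rule[of "[b, c]" "[b', c']" R "[a]" "[]"] rstep_by_rule[of "[a, b']" "[]" R "[]" "[c']"]
  by simp

fun letter_gen :: "'j letter \<Rightarrow> 'j" where
  "letter_gen (Pos j) = j"
| "letter_gen (Neg j) = j"

definition count_level :: "nat \<Rightarrow> ('b \<times> nat) letter list \<Rightarrow> nat" where
  "count_level i w = length (filter (\<lambda>c. snd (letter_gen c) = i) w)"

fun level_inversions :: "('b \<times> nat) letter list \<Rightarrow> nat" where
  "level_inversions [] = 0"
| "level_inversions (c # w) =
     (if snd (letter_gen c) = 0 then count_level 1 w else 0) + level_inversions w"

definition weight :: "('b \<times> nat) letter list \<Rightarrow> nat" where
  "weight w = length w + level_inversions w"

lemma count_level_append [simp]: "count_level i (u @ v) = count_level i u + count_level i v"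
  by (simp add: count_level_def)

lemma level_inversions_append:
  "level_inversions (u @ v) = level_inversions u + level_inversions v + count_level 0 u * count_level 1 v"
  by (induction u) (auto simp: count_level_def algebra_simps)

lemma weight_in_context:
  assumes "count_level 0 r \<le> count_level 0 l" "count_level 1 r \<le> count_level 1 l" "weight r < weight l"
  shows "weight (p @ r @ q) < weight (p @ l @ q)"
proof -
  have expand: "weight (p @ z @ q) = weight z + length p + length q + level_inversions p
      + level_inversions q + count_level 0 p * count_level 1 q
      + count_level 0 z * count_level 1 q + count_level 0 p * count_level 1 z" for z
    by (simp add: weight_def level_inversions_append algebra_simps)
  have "count_level 0 r * count_level 1 q \<le> count_level 0 l * count_level 1 q"
    "count_level 0 p * count_level 1 r \<le> count_level 0 p * count_level 1 l"
    using assms(1,2) by (simp_all add: mult_le_mono1 mult_le_mono2)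
  with assms(3) show ?thesis
    unfolding expand by linarith
qed

lemma wfp_rstep_if_weight_decreasing:
  assumes "\<And>l r. (l, r) \<in> R \<Longrightarrow>
    count_level 0 r \<le> count_level 0 l \<and> count_level 1 r \<le> count_level 1 l \<and> weight r < weight l"
  shows "wfp (rstep R)\<inverse>\<inverse>"
proof (rule wfp_if_convertible_to_nat[where f = weight])
  fix y x assume "(rstep R)\<inverse>\<inverse> y x"
  then obtain p l r q where "(l, r) \<in> R" "x = p @ l @ q" "y = p @ r @ q"
    unfolding rstep_def by auto
  with assms show "weight y < weight x" by (simp add: weight_in_context)
qed

section \<open>Words in a free group\<close>

fun inv_letter :: "'j letter \<Rightarrow> 'j letter" where
  "inv_letter (Pos j) = Neg j"
| "inv_letter (Neg j) = Pos j"

definition inv_word :: "'j letter list \<Rightarrow> 'j letter list" where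
  "inv_word w = rev (map inv_letter w)"

lemma inv_letter_inv_letter [simp]: "inv_letter (inv_letter c) = c"
  by (cases c) simp_all

lemma inv_word_inv_word [simp]: "inv_word (inv_word w) = w"
  by (simp add: inv_word_def rev_map comp_def)

lemma inv_word_in_words: "w \<in> words J \<Longrightarrow> inv_word w \<in> words J"
proof -
  have "inv_letter c \<in> alphabet J" if "c \<in> alphabet J" for c
    using that by (cases c) (auto simp: alphabet_def)
  then show "w \<in> words J \<Longrightarrow> inv_word w \<in> words J"
    by (auto simp: words_def inv_word_def)
qed

lemma group_equiv_eq_equivclp: "group_equiv J X = equivclp (gstep J X)"
  unfolding group_equiv_def sym_cl_eq_symclp equivclp_def ..

lemma group_equiv_refl [simp]: "group_equiv J X w w"
  by (simp add: group_equiv_def)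

lemma group_equiv_sym [sym]: "group_equiv J X x y \<Longrightarrow> group_equiv J X y x"
  unfolding group_equiv_eq_equivclp by (rule equivclp_sym)

lemma group_equiv_trans [trans]: "group_equiv J X x y \<Longrightarrow> group_equiv J X y z \<Longrightarrow> group_equiv J X x z"
  unfolding group_equiv_eq_equivclp by (rule equivclp_trans)

lemma group_equiv_in_context:
  assumes "group_equiv J X x y"
  shows "group_equiv J X (p @ x @ q) (p @ y @ q)"
proof -
  have step: "gstep J X (p @ x @ q) (p @ y @ q)" if xy_step: "gstep J X x y" for x y
  proof -
    obtain u v r where r: "r \<in> X \<or> (\<exists>j\<in>J. r = [Pos j, Neg j] \<or> r = [Neg j, Pos j])"
      and xy: "x = u @ v" "y = u @ r @ v"
      using xy_step unfolding gstep_def by blast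
    show ?thesis
      unfolding gstep_def
      by (rule exI[of _ "p @ u"], rule exI[of _ "v @ q"], rule exI[of _ r]) (simp add: r xy)
  qed
  from assms show ?thesis
    unfolding group_equiv_eq_equivclp
    by (induction rule: equivclp_induct) (simp, meson equivclp_into_equivclp step)
qed

lemma group_equiv_insert_relator: "r \<in> X \<Longrightarrow> group_equiv J X (u @ v) (u @ r @ v)"
  unfolding group_equiv_eq_equivclp gstep_def by blast

lemma group_equiv_insert_inverse_pair:
  assumes "c \<in> alphabet J"
  shows "group_equiv J X (u @ v) (u @ [c, inv_letter c] @ v)"
proof -
  have "\<exists>j\<in>J. [c, inv_letter c] = [Pos j, Neg j] \<or> [c, inv_letter c] = [Neg j, Pos j]"
    using assms by (cases c) (auto simp: alphabet_def)
  then show ?thesis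
    unfolding group_equiv_eq_equivclp gstep_def by blast
qed

lemma group_equiv_relator_trivial:
  assumes "r \<in> X"
  shows "group_equiv J X r []"
proof (rule group_equiv_sym)
  show "group_equiv J X [] r"
    using group_equiv_insert_relator[OF assms, where u = "[]" and v = "[]"] by simp
qed

lemma group_equiv_inverse_pair_trivial:
  assumes "j \<in> J"
  shows "group_equiv J X [Pos j, Neg j] []" and "group_equiv J X [Neg j, Pos j] []"
  using group_equiv_insert_inverse_pair[of "Pos j" J X "[]" "[]"]
    group_equiv_insert_inverse_pair[of "Neg j" J X "[]" "[]"] assms
  by (auto simp: alphabet_def intro: group_equiv_sym)

lemma group_equiv_append_inv_word: "w \<in> words J \<Longrightarrow> group_equiv J X [] (w @ inv_word w)"
proof (induction w)
  case (Cons c w)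
  then have c: "c \<in> alphabet J" and "w \<in> words J" by (auto simp: words_def)
  have "group_equiv J X [] ([c] @ [] @ [inv_letter c])"
    using group_equiv_insert_inverse_pair[OF c, of X "[]" "[]"] by simp
  also have "group_equiv J X \<dots> ([c] @ (w @ inv_word w) @ [inv_letter c])"
    using Cons.IH[OF \<open>w \<in> words J\<close>] by (rule group_equiv_in_context)
  finally show ?case by (simp add: inv_word_def)
qed (simp add: inv_word_def)

lemma group_equiv_rotate:
  assumes "group_equiv J X (u @ v) []" and "v \<in> words J"
  shows "group_equiv J X (v @ u) []"
proof -
  note v_inv = group_equiv_append_inv_word[OF assms(2), of X]
  have "group_equiv J X (v @ u) (v @ u @ v @ inv_word v)"
    using group_equiv_in_context[OF v_inv, of "v @ u" "[]"] by simp
  also have "group_equiv J X \<dots> (v @ inv_word v)"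
    using group_equiv_in_context[OF assms(1), of v "inv_word v"] by simp
  also have "group_equiv J X \<dots> []"
    using v_inv by (rule group_equiv_sym)
  finally show ?thesis .
qed

lemma group_equiv_if_append_inv_word:
  assumes "group_equiv J X (l @ inv_word r) []" and "r \<in> words J"
  shows "group_equiv J X l r"
proof -
  have "group_equiv J X l (l @ inv_word r @ r)"
    using group_equiv_in_context[OF group_equiv_append_inv_word[OF inv_word_in_words[OF assms(2)]],
      where p = l and q = "[]"]
    by simp
  also have "group_equiv J X \<dots> r"
    using group_equiv_in_context[OF assms(1), of "[]" r] by simp
  finally show ?thesis .
qed

lemma group_equiv_inv_word:
  assumes "group_equiv J X w []" and "w \<in> words J"
  shows "group_equiv J X (inv_word w) []"
proof -
  have "group_equiv J X (inv_word w) (inv_word w @ w)"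
    using group_equiv_in_context[OF group_equiv_sym[OF assms(1)], where p = "inv_word w" and q = "[]"]
    by simp
  also have "group_equiv J X \<dots> []"
    using group_equiv_sym[OF group_equiv_append_inv_word[OF inv_word_in_words[OF assms(2)]]] by simp
  finally show ?thesis .
qed

section \<open>Successors in copies of \<open>\<int>\<close>\<close>

lemma succ_in_order_iso:
  assumes bij: "bij_betw f UNIV B" and mono: "\<forall>x y. lt (f x) (f y) \<longleftrightarrow> x < (y :: int)"
  shows "succ_in B lt (f k) = f (k + 1)"
  unfolding succ_in_def
proof (rule the_equality)
  have f_onto: "\<exists>m. z = f m" if "z \<in> B" for z
    using bij that by (metis bij_betw_inv_into_right)
  have "f (k + 1) \<in> B"
    using bij bij_betwE by blast
  moreover have "\<not> (\<exists>z\<in>B. lt (f k) z \<and> lt z (f (k + 1)))"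
    using f_onto mono by force
  ultimately show "f (k + 1) \<in> B \<and> lt (f k) (f (k + 1)) \<and> \<not> (\<exists>z\<in>B. lt (f k) z \<and> lt z (f (k + 1)))"
    using mono by simp
  fix y assume y: "y \<in> B \<and> lt (f k) y \<and> \<not> (\<exists>z\<in>B. lt (f k) z \<and> lt z y)"
  then obtain m where m: "y = f m" using f_onto by blast
  with y mono have "k < m" by simp
  moreover have "\<not> k + 1 < m"
    using y m mono \<open>f (k + 1) \<in> B\<close> by auto
  ultimately have "m = k + 1" by linarith
  with m show "y = f (k + 1)" by simp
qed

lemma succ_in_closed_inj_on_if_order_iso:
  assumes bij: "bij_betw f UNIV B" and mono: "\<forall>x y. lt (f x) (f y) \<longleftrightarrow> x < (y :: int)"
  shows "succ_in B lt ` B \<subseteq> B" and "inj_on (succ_in B lt) B"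
proof -
  have onto: "\<exists>k. x = f k" if "x \<in> B" for x
    using bij that by (metis bij_betw_inv_into_right)
  have succ: "succ_in B lt (f k) = f (k + 1)" for k
    using bij mono by (rule succ_in_order_iso)
  show "succ_in B lt ` B \<subseteq> B"
    using onto succ bij_betwE[OF bij] by force
  show "inj_on (succ_in B lt) B"
  proof
    fix x y assume "x \<in> B" "y \<in> B" "succ_in B lt x = succ_in B lt y"
    with onto succ obtain k k' where "x = f k" "y = f k'" "f (k + 1) = f (k' + 1)" by metis
    with bij show "x = y" by (simp add: bij_betw_def inj_eq)
  qed
qed

lemma s_closed_inj_on_if_order_iso:
  assumes "\<And>n. \<exists>f :: int \<Rightarrow> 'a. bij_betw f UNIV (A n) \<and> (\<forall>x y. lt n (f x) (f y) \<longleftrightarrow> x < y)"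
  shows "s A lt ` Aset A \<subseteq> Aset A" and "inj_on (s A lt) (Aset A)"
proof -
  have "succ_in (A n) (lt n) ` A n \<subseteq> A n \<and> inj_on (succ_in (A n) (lt n)) (A n)" for n
    using assms[of n] succ_in_closed_inj_on_if_order_iso by blast
  then show "s A lt ` Aset A \<subseteq> Aset A" and "inj_on (s A lt) (Aset A)"
    by (fastforce simp: Aset_def s_def inj_on_def)+
qed

section \<open>The rewriting system\<close>

lemma cancellation_rules:
  assumes "j \<in> Jset A"
  shows "([Pos j, Neg j], []) \<in> rules A lt" and "([Neg j, Pos j], []) \<in> rules A lt"
  using assms unfolding Jset_def rules_def by auto

lemma commutation_rules:
  assumes "a \<in> Aset A"
  shows "([Pos (s A lt a, 0), Pos (a, 1)], [Neg (s A lt a, 1), Pos (s A lt a, 0)]) \<in> rules A lt"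
    and "([Pos (s A lt a, 0), Neg (a, 1)], [Pos (s A lt a, 1), Pos (s A lt a, 0)]) \<in> rules A lt"
    and "([Neg (s A lt a, 0), Pos (s A lt a, 1)], [Neg (a, 1), Neg (s A lt a, 0)]) \<in> rules A lt"
    and "([Neg (s A lt a, 0), Neg (s A lt a, 1)], [Pos (a, 1), Neg (s A lt a, 0)]) \<in> rules A lt"
  using assms unfolding rules_def by blast+

lemma rules_weight_decreasing:
  "(l, r) \<in> rules A lt \<Longrightarrow>
    count_level 0 r \<le> count_level 0 l \<and> count_level 1 r \<le> count_level 1 l \<and> weight r < weight l"
  by (auto simp: rules_def count_level_def weight_def)

lemma wfp_rstep_rules: "wfp (rstep (rules A lt))\<inverse>\<inverse>"
  using rules_weight_decreasing by (rule wfp_rstep_if_weight_decreasing)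

lemma terminus_freely_reduced:
  assumes "t \<in> words (Jset A)" and "terminus (rules A lt) t"
  shows "freely_reduced t"
  unfolding freely_reduced_def
proof clarify
  fix u v j assume "t = u @ [Pos j, Neg j] @ v \<or> t = u @ [Neg j, Pos j] @ v"
  moreover from this have "j \<in> Jset A"
    using assms(1) by (auto simp: words_def alphabet_def)
  ultimately have "rstep (rules A lt) t (u @ [] @ v)"
    using cancellation_rules rstep_by_rule by metis
  with assms(2) show False
    unfolding terminus_def by blast
qed

context
  fixes A :: "nat \<Rightarrow> 'a set" and lt :: "nat \<Rightarrow> 'a \<Rightarrow> 'a \<Rightarrow> bool"
  assumes s_closed: "s A lt ` Aset A \<subseteq> Aset A"
    and s_inj: "inj_on (s A lt) (Aset A)"
begin

lemma s_mem_Aset: "a \<in> Aset A \<Longrightarrow> s A lt a \<in> Aset A"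
  using s_closed by blast

lemma rules_critical_reductions:
  assumes a: "a \<in> Aset A"
  defines "x \<equiv> s A lt a"
  shows "(rstep (rules A lt))\<^sup>*\<^sup>* [Pos (x, 0), Neg (a, 1), Neg (x, 0)] [Pos (x, 1)]"
    and "(rstep (rules A lt))\<^sup>*\<^sup>* [Pos (x, 0), Pos (a, 1), Neg (x, 0)] [Neg (x, 1)]"
    and "(rstep (rules A lt))\<^sup>*\<^sup>* [Neg (x, 0), Neg (x, 1), Pos (x, 0)] [Pos (a, 1)]"
    and "(rstep (rules A lt))\<^sup>*\<^sup>* [Neg (x, 0), Pos (x, 1), Pos (x, 0)] [Neg (a, 1)]"
    and "(rstep (rules A lt))\<^sup>*\<^sup>* [Neg (x, 1), Pos (x, 0), Neg (a, 1)] [Pos (x, 0)]"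
    and "(rstep (rules A lt))\<^sup>*\<^sup>* [Neg (a, 1), Neg (x, 0), Neg (x, 1)] [Neg (x, 0)]"
    and "(rstep (rules A lt))\<^sup>*\<^sup>* [Pos (x, 1), Pos (x, 0), Pos (a, 1)] [Pos (x, 0)]"
    and "(rstep (rules A lt))\<^sup>*\<^sup>* [Pos (a, 1), Neg (x, 0), Pos (x, 1)] [Neg (x, 0)]"
proof -
  from a have "x \<in> Aset A"
    unfolding x_def by (rule s_mem_Aset)
  then have x0: "(x, 0) \<in> Jset A" and x1: "(x, 1) \<in> Jset A" and a1: "(a, 1) \<in> Jset A"
    using a by (auto simp: Jset_def)
  note comm = commutation_rules[where lt = lt, OF a, folded x_def]
    and cancel = cancellation_rules[where lt = lt]
  show "(rstep (rules A lt))\<^sup>*\<^sup>* [Pos (x, 0), Neg (a, 1), Neg (x, 0)] [Pos (x, 1)]"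
    by (rule rtranclp_rstep_rewrite_left_cancel_right[OF comm(2) cancel(1)[OF x0]])
  show "(rstep (rules A lt))\<^sup>*\<^sup>* [Pos (x, 0), Pos (a, 1), Neg (x, 0)] [Neg (x, 1)]"
    by (rule rtranclp_rstep_rewrite_left_cancel_right[OF comm(1) cancel(1)[OF x0]])
  show "(rstep (rules A lt))\<^sup>*\<^sup>* [Neg (x, 0), Neg (x, 1), Pos (x, 0)] [Pos (a, 1)]"
    by (rule rtranclp_rstep_rewrite_left_cancel_right[OF comm(4) cancel(2)[OF x0]])
  show "(rstep (rules A lt))\<^sup>*\<^sup>* [Neg (x, 0), Pos (x, 1), Pos (x, 0)] [Neg (a, 1)]"
    by (rule rtranclp_rstep_rewrite_left_cancel_right[OF comm(3) cancel(2)[OF x0]])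
  show "(rstep (rules A lt))\<^sup>*\<^sup>* [Neg (x, 1), Pos (x, 0), Neg (a, 1)] [Pos (x, 0)]"
    by (rule rtranclp_rstep_rewrite_right_cancel_left[OF comm(2) cancel(2)[OF x1]])
  show "(rstep (rules A lt))\<^sup>*\<^sup>* [Neg (a, 1), Neg (x, 0), Neg (x, 1)] [Neg (x, 0)]"
    by (rule rtranclp_rstep_rewrite_right_cancel_left[OF comm(4) cancel(2)[OF a1]])
  show "(rstep (rules A lt))\<^sup>*\<^sup>* [Pos (x, 1), Pos (x, 0), Pos (a, 1)] [Pos (x, 0)]"
    by (rule rtranclp_rstep_rewrite_right_cancel_left[OF comm(1) cancel(1)[OF x1]])
  show "(rstep (rules A lt))\<^sup>*\<^sup>* [Pos (a, 1), Neg (x, 0), Pos (x, 1)] [Neg (x, 0)]"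
    by (rule rtranclp_rstep_rewrite_right_cancel_left[OF comm(3) cancel(1)[OF a1]])
qed

lemma rules_critical_pairs_join:
  assumes "([c1, c2], r1) \<in> rules A lt" and "([c2, c3], r2) \<in> rules A lt"
  shows "\<exists>u. (rstep (rules A lt))\<^sup>*\<^sup>* (r1 @ [c3]) u \<and> (rstep (rules A lt))\<^sup>*\<^sup>* (c1 # r2) u"
proof -
  have join: "\<exists>u. (rstep R)\<^sup>*\<^sup>* x u \<and> (rstep R)\<^sup>*\<^sup>* y u"
    if "(rstep R)\<^sup>*\<^sup>* x y \<or> (rstep R)\<^sup>*\<^sup>* y x" for R and x y :: "'c list"
    using that by blast
  show ?thesis
    \<comment> \<open>Besides four trivial overlaps \<open>x x\<inverse> x\<close>, the two sides meet in one of the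
      \<open>rules_critical_reductions\<close>; \<open>One_nat_def\<close> is disabled so that the goals match them literally.\<close>
    using assms[unfolded rules_def]
    by (auto simp: inj_on_eq_iff[OF s_inj] simp del: One_nat_def
             intro!: join intro: rules_critical_reductions)
qed

lemma rules_length_two_rewriting: "length_two_rewriting (rules A lt)"
proof
  show "length l = 2" if "(l, r) \<in> rules A lt" for l r
    using that by (auto simp: rules_def)
  show "r = r'" if "(l, r) \<in> rules A lt" "(l, r') \<in> rules A lt" for l r r'
    using that by (auto simp: rules_def inj_on_eq_iff[OF s_inj] s_mem_Aset)
qed (fact rules_critical_pairs_join)

lemma rules_confluent: "confluentp (rstep (rules A lt))"
  using wfp_rstep_rules length_two_rewriting.locally_confluent[OF rules_length_two_rewriting]
  by (rule newman)

lemma rules_rhs_in_words: "(l, r) \<in> rules A lt \<Longrightarrow> r \<in> words (Jset A)"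
  by (auto simp: rules_def words_def alphabet_def Jset_def s_mem_Aset)

lemma rstep_rules_preserves_words:
  assumes "rstep (rules A lt) x y" and "x \<in> words (Jset A)"
  shows "y \<in> words (Jset A)"
  using assms rules_rhs_in_words unfolding rstep_def words_def by fastforce

lemma relator_reduces_to_empty:
  assumes "\<rho> \<in> relators A lt"
  shows "(rstep (rules A lt))\<^sup>*\<^sup>* \<rho> []"
proof -
  obtain a where a: "a \<in> Aset A"
    and \<rho>: "\<rho> = [Pos (s A lt a, 0), Pos (a, 1), Neg (s A lt a, 0), Pos (s A lt a, 1)]"
    using assms unfolding relators_def by blast
  define x where "x = s A lt a"
  have "(x, 0) \<in> Jset A" "(x, 1) \<in> Jset A"
    using s_mem_Aset[OF a] by (auto simp: Jset_def x_def)
  then have "rstep (rules A lt) [Neg (x, 1), Pos (x, 0), Neg (x, 0), Pos (x, 1)] [Neg (x, 1), Pos (x, 1)]"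
    and "rstep (rules A lt) [Neg (x, 1), Pos (x, 1)] []"
    using rstep_by_rule[OF cancellation_rules(1), where p = "[Neg (x, 1)]" and q = "[Pos (x, 1)]"]
      rstep_by_rule[OF cancellation_rules(2), where p = "[]" and q = "[]"] by simp_all
  moreover have "rstep (rules A lt) \<rho> [Neg (x, 1), Pos (x, 0), Neg (x, 0), Pos (x, 1)]"
    using rstep_by_rule[OF commutation_rules(1)[OF a], where p = "[]" and q = "[Neg (x, 0), Pos (x, 1)]"]
    by (simp add: \<rho> x_def)
  ultimately show ?thesis by (meson converse_rtranclp_into_rtranclp rtranclp.rtrancl_refl)
qed

lemma group_equiv_imp_requiv:
  assumes "group_equiv (Jset A) (relators A lt) x y"
  shows "requiv (rules A lt) x y"
  using assms unfolding group_equiv_eq_equivclp requiv_eq_equivclp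
proof (rule equivclp_least[rotated])
  fix x y assume "gstep (Jset A) (relators A lt) x y"
  then obtain u v r where r: "r \<in> relators A lt \<or> (\<exists>j\<in>Jset A. r = [Pos j, Neg j] \<or> r = [Neg j, Pos j])"
    and xy: "x = u @ v" "y = u @ r @ v"
    unfolding gstep_def by blast
  have "(rstep (rules A lt))\<^sup>*\<^sup>* r []"
  proof (cases "r \<in> relators A lt")
    case True
    then show ?thesis by (rule relator_reduces_to_empty)
  next
    case False
    with r obtain j where "j \<in> Jset A" "r = [Pos j, Neg j] \<or> r = [Neg j, Pos j]" by blast
    then have "(r, []) \<in> rules A lt"
      using cancellation_rules by blast
    from rstep_by_rule[OF this, where p = "[]" and q = "[]"] show ?thesis by simp
  qed
  from rtranclp_rstep_in_context[OF this, where p = u and q = v]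
  have "(rstep (rules A lt))\<^sup>*\<^sup>* y x"
    using xy by simp
  then show "equivclp (rstep (rules A lt)) x y"
    by (rule converse_rtranclp_into_equivclp)
qed

lemma relator_rotations_trivial:
  assumes a: "a \<in> Aset A"
  defines "x \<equiv> s A lt a"
  shows "group_equiv (Jset A) (relators A lt) [Pos (x, 0), Pos (a, 1), Neg (x, 0), Pos (x, 1)] []"
    and "group_equiv (Jset A) (relators A lt) [Pos (x, 0), Neg (a, 1), Neg (x, 0), Neg (x, 1)] []"
    and "group_equiv (Jset A) (relators A lt) [Neg (x, 0), Pos (x, 1), Pos (x, 0), Pos (a, 1)] []"
    and "group_equiv (Jset A) (relators A lt) [Neg (x, 0), Neg (x, 1), Pos (x, 0), Neg (a, 1)] []"
proof -
  let ?G = "group_equiv (Jset A) (relators A lt)"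
  have letters: "Pos (a, 1) \<in> alphabet (Jset A)" "Neg (a, 1) \<in> alphabet (Jset A)"
    "Pos (x, 0) \<in> alphabet (Jset A)" "Neg (x, 0) \<in> alphabet (Jset A)"
    "Pos (x, 1) \<in> alphabet (Jset A)" "Neg (x, 1) \<in> alphabet (Jset A)"
    using a s_mem_Aset[OF a] by (auto simp: alphabet_def Jset_def x_def)
  have "[Pos (x, 0), Pos (a, 1), Neg (x, 0), Pos (x, 1)] \<in> relators A lt"
    using a unfolding relators_def x_def by blast
  then show rel: "?G [Pos (x, 0), Pos (a, 1), Neg (x, 0), Pos (x, 1)] []"
    by (rule group_equiv_relator_trivial)
  have rel_inv: "?G [Neg (x, 1), Pos (x, 0), Neg (a, 1), Neg (x, 0)] []"
    using group_equiv_inv_word[OF rel] letters by (simp add: inv_word_def words_def)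
  have "?G ([Neg (x, 1)] @ [Pos (x, 0), Neg (a, 1), Neg (x, 0)]) []"
    using rel_inv by simp
  from group_equiv_rotate[OF this] letters
  show "?G [Pos (x, 0), Neg (a, 1), Neg (x, 0), Neg (x, 1)] []"
    by (simp add: words_def)
  have "?G ([Pos (x, 0), Pos (a, 1)] @ [Neg (x, 0), Pos (x, 1)]) []"
    using rel by simp
  from group_equiv_rotate[OF this] letters
  show "?G [Neg (x, 0), Pos (x, 1), Pos (x, 0), Pos (a, 1)] []"
    by (simp add: words_def)
  have "?G ([Neg (x, 1), Pos (x, 0), Neg (a, 1)] @ [Neg (x, 0)]) []"
    using rel_inv by simp
  from group_equiv_rotate[OF this] letters
  show "?G [Neg (x, 0), Neg (x, 1), Pos (x, 0), Neg (a, 1)] []"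
    by (simp add: words_def)
qed

lemma rule_group_equiv:
  assumes "(l, r) \<in> rules A lt"
  shows "group_equiv (Jset A) (relators A lt) l r"
proof -
  obtain a where a: "a \<in> Aset A" and lr:
    "(l, r) \<in> {([Pos (a, 0), Neg (a, 0)], []), ([Neg (a, 0), Pos (a, 0)], []),
       ([Pos (a, 1), Neg (a, 1)], []), ([Neg (a, 1), Pos (a, 1)], []),
       ([Pos (s A lt a, 0), Pos (a, 1)], [Neg (s A lt a, 1), Pos (s A lt a, 0)]),
       ([Pos (s A lt a, 0), Neg (a, 1)], [Pos (s A lt a, 1), Pos (s A lt a, 0)]),
       ([Neg (s A lt a, 0), Pos (s A lt a, 1)], [Neg (a, 1), Neg (s A lt a, 0)]),
       ([Neg (s A lt a, 0), Neg (s A lt a, 1)], [Pos (a, 1), Neg (s A lt a, 0)])}"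
    using assms unfolding rules_def by blast
  have "(a, 0) \<in> Jset A" "(a, 1) \<in> Jset A"
    using a by (simp_all add: Jset_def)
  \<comment> \<open>\<open>One_nat_def\<close> is disabled to keep the literal \<open>1\<close> of the facts used\<close>
  with lr relator_rotations_trivial[OF a] have "group_equiv (Jset A) (relators A lt) (l @ inv_word r) []"
    by (auto simp: inv_word_def group_equiv_inverse_pair_trivial simp del: One_nat_def)
  then show ?thesis
    using rules_rhs_in_words[OF assms] by (rule group_equiv_if_append_inv_word)
qed

lemma group_equiv_iff_requiv:
  "group_equiv (Jset A) (relators A lt) x y \<longleftrightarrow> requiv (rules A lt) x y"
proof
  show "requiv (rules A lt) x y" if "group_equiv (Jset A) (relators A lt) x y"
    using that by (rule group_equiv_imp_requiv)
  show "group_equiv (Jset A) (relators A lt) x y" if "requiv (rules A lt) x y"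
    using that unfolding group_equiv_eq_equivclp requiv_eq_equivclp
  proof (rule equivclp_least[rotated])
    fix x y assume "rstep (rules A lt) x y"
    then obtain p l r q where "(l, r) \<in> rules A lt" "x = p @ l @ q" "y = p @ r @ q"
      unfolding rstep_def by blast
    then show "equivclp (gstep (Jset A) (relators A lt)) x y"
      using group_equiv_in_context[OF rule_group_equiv] unfolding group_equiv_eq_equivclp by simp
  qed
qed

end

theorem mainTheorem8:
  fixes A :: "nat \<Rightarrow> 'a set" and lt :: "nat \<Rightarrow> 'a \<Rightarrow> 'a \<Rightarrow> bool"
  assumes iso: "\<And>n. \<exists>f :: int \<Rightarrow> 'a. bij_betw f UNIV (A n) \<and>
                    (\<forall>x y. lt n (f x) (f y) \<longleftrightarrow> x < y)"
  defines "W \<equiv> words (Jset A)"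
  shows "terminating_on W (rules A lt)
    \<and> locally_confluent_on W (rules A lt)
    \<and> confluent_on W (rules A lt)
    \<and> (\<forall>w\<in>W. \<exists>!t. t \<in> W \<and> terminus (rules A lt) t \<and> requiv (rules A lt) w t)
    \<and> (\<forall>t\<in>W. terminus (rules A lt) t \<longrightarrow> freely_reduced t)
    \<and> (\<forall>w\<in>W. \<exists>!t. t \<in> W \<and> terminus (rules A lt) t
                  \<and> group_equiv (Jset A) (relators A lt) w t)"
proof -
  note s_props = s_closed_inj_on_if_order_iso[where A = A and lt = lt, OF iso]
  note wf = wfp_rstep_rules[of A lt]
  note confl = rules_confluent[OF s_props]
  have normal_forms: "\<exists>!t. t \<in> W \<and> terminus (rules A lt) t \<and> requiv (rules A lt) w t" if "w \<in> W" for w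
    by (rule ex1_terminus_requiv[OF wf confl _ that])
      (use rstep_rules_preserves_words[OF s_props] in \<open>simp add: W_def\<close>)
  show ?thesis
    unfolding locally_confluent_on_def confluent_on_def group_equiv_iff_requiv[OF s_props]
    using terminating_on_if_wfp[OF wf]
      length_two_rewriting.locally_confluent[OF rules_length_two_rewriting[OF s_props]]
      confluentpD[OF confl] normal_forms terminus_freely_reduced
    unfolding W_def by blast
qed

end
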